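(* Let $\Sigma_{\mathsf f}\in\mathbb R^{n\times n}$ be symmetric positive definite and $\mu_{\mathsf f}\in\mathbb R^n$. Consider the system, noise model and affine disturbance feedback policy described in the context, with decision space $\mathscr D$. Then the set of $(\bar{\bm u},\bm{\mathcal K})\in\mathscr D$ for which the resulting closed-loop system satisfies both $\mathrm{var}_x(T)\preceq\Sigma_{\mathsf f}$ (i.e. $\Sigma_{\mathsf f}-\mathrm{var}_x(T)$ is positive semidefinite) and $\mu_x(T)=\mu_{\mathsf f}$ is a convex subset of $\mathscr D$.
   Context: System: $x(t+1)=A(t)x(t)+B(t)u(t)+w(t)$, $t\in\{0,\dots,T-1\}$, $x(0)=x_0\sim\mathcal N(\mu_0,\Sigma_0)$ with $\Sigma_0$ symmetric positive definite; $w(0),\dots,w(T-1)$ i.i.d. Gaussian with mean $0$ and covariance $W$ (symmetric positive semidefinite), uncorrelated across time, and $\mathbb E[x_0w(t)^\top]=0$. Policy: $u(0)=\bar u(0)$, $u(t)=\bar u(t)+\sum_{\tau=0}^{t-1}K_{(t-1,\tau)}w(\tau)$ for $t\in\{1,\dots,T-1\}$, with $K_{(t-1,\tau)}\in\mathbb R^{m\times n}$. $\bar{\bm u}$ is the vertical concatenation of $\bar u(0),\dots,\bar u(T-1)$; $\bm{\mathcal K}:=\begin{bmatrix}0&0\\ \mathbf K&0\end{bmatrix}\in\mathbb R^{Tm\times Tn}$ with $\mathbf K$ block lower triangular having $(i,j)$ block $K_{(i,j)}$, $0\le j\le i\le T-2$, so that the stacked input is $\bm u=\bar{\bm u}+\bm{\mathcal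 K}\bm w$ with $\bm w$ the concatenation of $w(0),\dots,w(T-1)$. $\mathscr D$ is the set of all pairs $(\bar{\bm u},\bm{\mathcal K})\in\mathbb R^{Tm}\times\mathbb R^{Tm\times Tn}$ with $\bm{\mathcal K}$ of this structure. $\mu_x(T)=\mathbb E[x(T)]$ and $\mathrm{var}_x(T)=\mathbb E[(x(T)-\mu_x(T))(x(T)-\mu_x(T))^\top]$; $\preceq$ is the Loewner order. *)

theory Defs
  imports "HOL-Analysis.Analysis" "HOL-Probability.Probability"
begin

(* Matrices: real^'c^'r is an 'r x 'c matrix (rows indexed by 'r). *)

definition outer :: "real^'n \<Rightarrow> real^'k \<Rightarrow> real^'k^'n" where
  "outer u v = (\<chi> i j. u $ i * v $ j)"

definition psd :: "real^'n^'n \<Rightarrow> bool" where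
  "psd P \<longleftrightarrow> (\<forall>v. 0 \<le> v \<bullet> (P *v v))"

definition sym_psd :: "real^'n^'n \<Rightarrow> bool" where
  "sym_psd P \<longleftrightarrow> transpose P = P \<and> psd P"

definition sym_pd :: "real^'n^'n \<Rightarrow> bool" where
  "sym_pd P \<longleftrightarrow> transpose P = P \<and> (\<forall>v. v \<noteq> 0 \<longrightarrow> 0 < v \<bullet> (P *v v))"

definition loewner_le :: "real^'n^'n \<Rightarrow> real^'n^'n \<Rightarrow> bool" where
  "loewner_le P Q \<longleftrightarrow> psd (Q - P)"

(* X is a Gaussian random vector N(mu, S): every linear functional a.X is
   normal with mean a.mu and variance a' S a (degenerate = a.s. constant if the
   variance is 0).  (Cramer-Wold characterisation of the multivariate normal.) *)
definition gaussian_vec :: "'a measure \<Rightarrow> ('a \<Rightarrow> real^'n) \<Rightarrow> real^'n \<Rightarrow> real^'n^'n \<Rightarrow> bool" where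
  "gaussian_vec M X mu S \<longleftrightarrow> X \<in> borel_measurable M \<and>
     (\<forall>a. let m = a \<bullet> mu; s = a \<bullet> (S *v a) in
        if s = 0 then (AE \<omega> in M. a \<bullet> X \<omega> = m)
        else distributed M lborel (\<lambda>\<omega>. a \<bullet> X \<omega>) (normal_density m (sqrt s)))"

(* Input of the affine disturbance feedback policy:
   u(t) = ubar(t) + sum_{tau<t} K_(t-1,tau) w(tau)  (empty sum for t = 0) *)
definition policy_input ::
  "(nat \<Rightarrow> real^'m) \<Rightarrow> (nat \<Rightarrow> nat \<Rightarrow> real^'n^'m) \<Rightarrow> (nat \<Rightarrow> 'a \<Rightarrow> real^'n) \<Rightarrow> nat \<Rightarrow> 'a \<Rightarrow> real^'m" where
  "policy_input ub K w t \<omega> = ub t + (\<Sum>\<tau><t. K (t - 1) \<tau> *v w \<tau> \<omega>)"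

primrec traj ::
  "(nat \<Rightarrow> real^'n^'n) \<Rightarrow> (nat \<Rightarrow> real^'m^'n) \<Rightarrow> ('a \<Rightarrow> real^'n) \<Rightarrow> (nat \<Rightarrow> 'a \<Rightarrow> real^'n)
   \<Rightarrow> (nat \<Rightarrow> real^'m) \<Rightarrow> (nat \<Rightarrow> nat \<Rightarrow> real^'n^'m) \<Rightarrow> nat \<Rightarrow> 'a \<Rightarrow> real^'n" where
  "traj A B x0 w ub K 0 \<omega> = x0 \<omega>"
| "traj A B x0 w ub K (Suc t) \<omega> =
     A t *v traj A B x0 w ub K t \<omega> + B t *v policy_input ub K w t \<omega> + w t \<omega>"

definition mean_x where
  "mean_x M A B x0 w ub K t = integral\<^sup>L M (\<lambda>\<omega>. traj A B x0 w ub K t \<omega>)"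

definition var_x where
  "var_x M A B x0 w ub K t =
     integral\<^sup>L M (\<lambda>\<omega>. outer (traj A B x0 w ub K t \<omega> - mean_x M A B x0 w ub K t)
                            (traj A B x0 w ub K t \<omega> - mean_x M A B x0 w ub K t))"

(* Decision space D: ubar(0..T-1) and K_(i,j) for 0 <= j <= i <= T-2;
   represented canonically by functions vanishing outside these index ranges. *)
definition decision_space :: "nat \<Rightarrow> ((nat \<Rightarrow> real^'m) \<times> (nat \<Rightarrow> nat \<Rightarrow> real^'n^'m)) set" where
  "decision_space T = {(ub, K). (\<forall>t. T \<le> t \<longrightarrow> ub t = 0) \<and>
                                (\<forall>i j. \<not> (j \<le> i \<and> i + 2 \<le> T) \<longrightarrow> K i j = 0)}"

definition dec_convex :: "((nat \<Rightarrow> real^'m) \<times> (nat \<Rightarrow> nat \<Rightarrow> real^'n^'m)) set \<Rightarrow> bool" where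
  "dec_convex S \<longleftrightarrow> (\<forall>ub1 K1 ub2 K2 \<theta>::real. (ub1, K1) \<in> S \<longrightarrow> (ub2, K2) \<in> S \<longrightarrow> 0 \<le> \<theta> \<longrightarrow> \<theta> \<le> 1 \<longrightarrow>
      ((\<lambda>t. \<theta> *\<^sub>R ub1 t + (1 - \<theta>) *\<^sub>R ub2 t),
       (\<lambda>i j. \<theta> *\<^sub>R K1 i j + (1 - \<theta>) *\<^sub>R K2 i j)) \<in> S)"

end

theory Submission
  imports Defs
begin

text \<open>For every sample, the closed-loop state x(T) is an affine function of the policy
  parameters (ubar, K). Hence its mean is affine in them, and for each direction v the quadratic
  form v' var_x(T) v = E[(v' (x(T) - E x(T)))^2] is convex in them, by pointwise convexity of the
  square. The constraint set is therefore the intersection of the convex decision space with an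
  affine subspace and a Loewner sublevel set of a Loewner-convex map.
  Gaussianity is used only to make x(T) square integrable: without that, the Bochner integrals
  defining mean and variance would silently default to 0.\<close>

definition square_integrable ::
    "'a measure \<Rightarrow> ('a \<Rightarrow> 'b::{banach, second_countable_topology}) \<Rightarrow> bool" where
  "square_integrable M X \<longleftrightarrow> X \<in> borel_measurable M \<and> integrable M (\<lambda>x. (norm (X x))\<^sup>2)"

lemma square_integrable_add:
  assumes "square_integrable M X" "square_integrable M Y"
  shows "square_integrable M (\<lambda>x. X x + Y x)"
proof -
  have [measurable]: "X \<in> borel_measurable M" "Y \<in> borel_measurable M"
    using assms unfolding square_integrable_def by auto
  have bound: "(norm (a + b))\<^sup>2 \<le> 2 * (norm a)\<^sup>2 + 2 * (norm b)\<^sup>2" for a b :: 'b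
  proof -
    have "(norm (a + b))\<^sup>2 \<le> (norm a + norm b)\<^sup>2"
      by (simp add: norm_triangle_ineq power_mono)
    also have "\<dots> \<le> 2 * (norm a)\<^sup>2 + 2 * (norm b)\<^sup>2"
      using sum_squares_bound[of "norm a" "norm b"] by (simp add: power2_sum)
    finally show ?thesis .
  qed
  have "integrable M (\<lambda>x. (norm (X x + Y x))\<^sup>2)"
  proof (rule Bochner_Integration.integrable_bound)
    show "integrable M (\<lambda>x. 2 * (norm (X x))\<^sup>2 + 2 * (norm (Y x))\<^sup>2)"
      using assms unfolding square_integrable_def by simp
    show "AE x in M. norm ((norm (X x + Y x))\<^sup>2) \<le> norm (2 * (norm (X x))\<^sup>2 + 2 * (norm (Y x))\<^sup>2)"
      using bound by simp
  qed measurable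
  moreover have "(\<lambda>x. X x + Y x) \<in> borel_measurable M"
    by measurable
  ultimately show ?thesis
    unfolding square_integrable_def by blast
qed

lemma square_integrable_bounded_linear:
  fixes f :: "'b::{banach, second_countable_topology} \<Rightarrow> 'c::{banach, second_countable_topology}"
  assumes f: "bounded_linear f" and X: "square_integrable M X"
  shows "square_integrable M (\<lambda>x. f (X x))"
proof -
  have [measurable]: "X \<in> borel_measurable M" "f \<in> borel_measurable borel"
    using X unfolding square_integrable_def
    by (auto intro: borel_measurable_continuous_onI linear_continuous_on f)
  obtain K where K: "\<And>a. norm (f a) \<le> norm a * K"
    using bounded_linear.bounded[OF f] by blast
  have bound: "(norm (f a))\<^sup>2 \<le> K\<^sup>2 * (norm a)\<^sup>2" for a
  proof -
    have "(norm (f a))\<^sup>2 \<le> (norm a * K)\<^sup>2"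
      using K by (rule power_mono) simp
    then show ?thesis by (simp add: power_mult_distrib mult.commute)
  qed
  have "integrable M (\<lambda>x. (norm (f (X x)))\<^sup>2)"
  proof (rule Bochner_Integration.integrable_bound)
    show "integrable M (\<lambda>x. K\<^sup>2 * (norm (X x))\<^sup>2)"
      using X unfolding square_integrable_def by simp
    show "AE x in M. norm ((norm (f (X x)))\<^sup>2) \<le> norm (K\<^sup>2 * (norm (X x))\<^sup>2)"
      using bound by simp
  qed measurable
  moreover have "(\<lambda>x. f (X x)) \<in> borel_measurable M"
    by measurable
  ultimately show ?thesis
    unfolding square_integrable_def by blast
qed

lemma square_integrable_const:
  assumes "finite_measure M" shows "square_integrable M (\<lambda>x. c)"
  using assms unfolding square_integrable_def by (simp add: finite_measure.integrable_const)

lemma square_integrable_sum: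
  assumes "finite I" "\<And>i. i \<in> I \<Longrightarrow> square_integrable M (X i)"
  shows "square_integrable M (\<lambda>x. \<Sum>i\<in>I. X i x)"
  using assms
proof (induction I rule: finite_induct)
  case empty
  then show ?case by (simp add: square_integrable_def)
next
  case (insert i I)
  then have "square_integrable M (\<lambda>x. X i x + (\<Sum>j\<in>I. X j x))"
    by (intro square_integrable_add) auto
  with insert.hyps show ?case by simp
qed

lemma square_integrable_diff_const:
  assumes "finite_measure M" "square_integrable M X"
  shows "square_integrable M (\<lambda>x. X x - c)"
  using square_integrable_add[OF assms(2) square_integrable_const[OF assms(1), of "- c"]] by simp

lemma square_integrable_integrable:
  assumes "finite_measure M" "square_integrable M X"
  shows "integrable M X"
proof -
  have [measurable]: "X \<in> borel_measurable M"
    using assms(2) unfolding square_integrable_def by simp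
  have "integrable M (\<lambda>x. norm (X x))"
  proof (rule finite_measure.square_integrable_imp_integrable[OF assms(1)])
    show "integrable M (\<lambda>x. (norm (X x))\<^sup>2)"
      using assms(2) unfolding square_integrable_def by simp
  qed measurable
  then show ?thesis by (simp add: integrable_norm_iff[of X])
qed

lemma square_integrable_euclidean:
  fixes X :: "'a \<Rightarrow> 'b::euclidean_space"
  assumes "\<And>b. b \<in> Basis \<Longrightarrow> square_integrable M (\<lambda>x. X x \<bullet> b)"
  shows "square_integrable M X"
proof -
  have "square_integrable M (\<lambda>x. \<Sum>b\<in>Basis. (X x \<bullet> b) *\<^sub>R b)"
    using assms
    by (intro square_integrable_sum square_integrable_bounded_linear[OF bounded_linear_scaleR_left])
      auto
  then show ?thesis
    by (simp add: euclidean_representation)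
qed

lemma integrable_bounded_bilinear:
  fixes h :: "'b::{banach, second_countable_topology} \<Rightarrow> 'c::{banach, second_countable_topology}
      \<Rightarrow> 'd::{banach, second_countable_topology}"
  assumes h: "bounded_bilinear h"
    and X: "square_integrable M X" and Y: "square_integrable M Y"
  shows "integrable M (\<lambda>x. h (X x) (Y x))"
proof -
  have [measurable]: "X \<in> borel_measurable M" "Y \<in> borel_measurable M"
    using X Y unfolding square_integrable_def by auto
  obtain K where K: "\<And>a b. norm (h a b) \<le> norm a * norm b * K" and "0 < K"
    using bounded_bilinear.pos_bounded[OF h] by blast
  have bound: "norm (h a b) \<le> K * ((norm a)\<^sup>2 + (norm b)\<^sup>2)" for a b
  proof -
    have "norm (h a b) \<le> K * (norm a * norm b)"
      using K[of a b] by (simp add: ac_simps)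
    also have "\<dots> \<le> K * ((norm a)\<^sup>2 + (norm b)\<^sup>2)"
    proof (rule mult_left_mono)
      have "2 * (norm a * norm b) \<le> (norm a)\<^sup>2 + (norm b)\<^sup>2"
        using sum_squares_bound[of "norm a" "norm b"] by (simp add: mult.assoc)
      then show "norm a * norm b \<le> (norm a)\<^sup>2 + (norm b)\<^sup>2"
        using mult_nonneg_nonneg[OF norm_ge_zero norm_ge_zero, of a b] by linarith
    qed (use \<open>0 < K\<close> in simp)
    finally show ?thesis .
  qed
  show ?thesis
  proof (rule Bochner_Integration.integrable_bound)
    show "integrable M (\<lambda>x. K * ((norm (X x))\<^sup>2 + (norm (Y x))\<^sup>2))"
      using X Y unfolding square_integrable_def by simp
    show "(\<lambda>x. h (X x) (Y x)) \<in> borel_measurable M"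
    proof (rule borel_measurable_continuous_Pair[of X M Y h])
      show "continuous_on UNIV (\<lambda>x. h (fst x) (snd x))"
        by (intro bounded_bilinear.continuous_on[OF h] continuous_on_fst continuous_on_snd
            continuous_on_id)
    qed measurable
    show "AE x in M. norm (h (X x) (Y x)) \<le> norm (K * ((norm (X x))\<^sup>2 + (norm (Y x))\<^sup>2))"
      using bound by (auto intro: order_trans[OF _ abs_ge_self])
  qed
qed

lemma normal_distributed_square_integrable:
  assumes "prob_space M" "0 < \<sigma>" and D: "distributed M lborel X (normal_density \<mu> \<sigma>)"
  shows "square_integrable M X"
proof -
  have [measurable]: "X \<in> borel_measurable M"
    using distributed_measurable[OF D] by simp
  have "integrable M (\<lambda>x. (X x - \<mu>)\<^sup>2)"
    using distributed_integrable[OF D, of "\<lambda>x. (x - \<mu>)\<^sup>2"]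
      integrable_normal_moment[OF \<open>0 < \<sigma>\<close>, of \<mu> 2]
    by simp
  then have "square_integrable M (\<lambda>x. X x - \<mu>)"
    unfolding square_integrable_def by simp
  then have "square_integrable M (\<lambda>x. (X x - \<mu>) - - \<mu>)"
    using prob_space.finite_measure[OF \<open>prob_space M\<close>] square_integrable_diff_const by blast
  then show ?thesis by simp
qed

lemma gaussian_vec_inner_square_integrable:
  assumes "prob_space M" "gaussian_vec M X \<mu> S" "psd S"
  shows "square_integrable M (\<lambda>x. a \<bullet> X x)"
proof -
  interpret prob_space M by fact
  have [measurable]: "X \<in> borel_measurable M"
    using assms(2) unfolding gaussian_vec_def by simp
  define s where "s = a \<bullet> (S *v a)"
  have "0 \<le> s"
    using \<open>psd S\<close> unfolding psd_def s_def by simp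
  show ?thesis
  proof (cases "s = 0")
    case True
    then have "AE x in M. a \<bullet> X x = a \<bullet> \<mu>"
      using assms(2) unfolding gaussian_vec_def s_def Let_def by auto
    then have "AE x in M. (norm (a \<bullet> X x))\<^sup>2 = (a \<bullet> \<mu>)\<^sup>2"
      by auto
    then have "integrable M (\<lambda>x. (norm (a \<bullet> X x))\<^sup>2)"
      by (subst integrable_cong_AE[where g="\<lambda>x. (a \<bullet> \<mu>)\<^sup>2"]) auto
    then show ?thesis
      unfolding square_integrable_def by simp
  next
    case False
    then have "distributed M lborel (\<lambda>x. a \<bullet> X x) (normal_density (a \<bullet> \<mu>) (sqrt s))"
      using assms(2) unfolding gaussian_vec_def s_def Let_def by auto
    moreover have "0 < sqrt s"
      using False \<open>0 \<le> s\<close> by simp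
    ultimately show ?thesis
      by (intro normal_distributed_square_integrable[OF \<open>prob_space M\<close>])
  qed
qed

lemma gaussian_vec_square_integrable:
  assumes "prob_space M" "gaussian_vec M X \<mu> S" "psd S"
  shows "square_integrable M X"
proof (rule square_integrable_euclidean)
  fix b
  show "square_integrable M (\<lambda>x. X x \<bullet> b)"
    using gaussian_vec_inner_square_integrable[OF assms, of b] by (simp add: inner_commute)
qed

lemma sym_pd_imp_psd: "sym_pd P \<Longrightarrow> psd P"
  unfolding sym_pd_def psd_def by (metis inner_zero_left order_le_less)

lemma loewner_le_iff_quadratic_form: "loewner_le P Q \<longleftrightarrow> (\<forall>v. v \<bullet> (P *v v) \<le> v \<bullet> (Q *v v))"
  unfolding loewner_le_def psd_def by (simp add: matrix_vector_mult_diff_rdistrib inner_diff_right)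

lemma loewner_le_trans: "loewner_le P Q \<Longrightarrow> loewner_le Q R \<Longrightarrow> loewner_le P R"
  unfolding loewner_le_iff_quadratic_form by (blast intro: order_trans)

lemma loewner_le_convex_combination:
  assumes "loewner_le P1 Q" "loewner_le P2 Q" "0 \<le> \<theta>" "\<theta> \<le> 1"
  shows "loewner_le (\<theta> *\<^sub>R P1 + (1 - \<theta>) *\<^sub>R P2) Q"
  using assms unfolding loewner_le_iff_quadratic_form
  by (simp add: matrix_vector_mult_add_rdistrib scaleR_matrix_vector_assoc[symmetric]
      inner_add_right convex_bound_le)

lemma bounded_linear_quadratic_form: "bounded_linear (\<lambda>P :: real^'n^'n. v \<bullet> (P *v v))"
  unfolding linear_conv_bounded_linear[symmetric]
  by (rule linearI)
    (simp_all add: matrix_vector_mult_add_rdistrib scaleR_matrix_vector_assoc[symmetric]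
      inner_add_right)

lemma bounded_bilinear_outer: "bounded_bilinear (outer :: real^'n \<Rightarrow> real^'k \<Rightarrow> real^'k^'n)"
  unfolding bilinear_conv_bounded_bilinear[symmetric] bilinear_def
  by (auto intro!: linearI simp: outer_def vec_eq_iff algebra_simps)

lemma quadratic_form_outer: "v \<bullet> (outer z z *v v) = (v \<bullet> z)\<^sup>2"
  by (simp add: outer_def matrix_vector_mult_def inner_vec_def power2_eq_square sum_product
      sum_distrib_left ac_simps)

definition covariance_matrix :: "'a measure \<Rightarrow> ('a \<Rightarrow> real^'n) \<Rightarrow> real^'n^'n" where
  "covariance_matrix M Y =
     (\<integral>x. outer (Y x - integral\<^sup>L M Y) (Y x - integral\<^sup>L M Y) \<partial>M)"

lemma quadratic_form_covariance_matrix: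
  assumes "finite_measure M" "square_integrable M Y"
  shows "v \<bullet> (covariance_matrix M Y *v v) = (\<integral>x. (v \<bullet> (Y x - integral\<^sup>L M Y))\<^sup>2 \<partial>M)"
proof -
  have "square_integrable M (\<lambda>x. Y x - integral\<^sup>L M Y)"
    using assms by (rule square_integrable_diff_const)
  then have "integrable M (\<lambda>x. outer (Y x - integral\<^sup>L M Y) (Y x - integral\<^sup>L M Y))"
    by (intro integrable_bounded_bilinear[OF bounded_bilinear_outer])
  from integral_bounded_linear[OF bounded_linear_quadratic_form this, of v] show ?thesis
    by (simp add: covariance_matrix_def quadratic_form_outer)
qed

lemma square_convex_combination_le:
  fixes a b \<theta> :: real
  assumes "0 \<le> \<theta>" "\<theta> \<le> 1"
  shows "(\<theta> * a + (1 - \<theta>) * b)\<^sup>2 \<le> \<theta> * a\<^sup>2 + (1 - \<theta>) * b\<^sup>2"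
proof -
  have "\<theta> * a\<^sup>2 + (1 - \<theta>) * b\<^sup>2 - (\<theta> * a + (1 - \<theta>) * b)\<^sup>2 = \<theta> * (1 - \<theta>) * (a - b)\<^sup>2"
    by (simp add: power2_eq_square algebra_simps)
  moreover have "0 \<le> \<theta> * (1 - \<theta>) * (a - b)\<^sup>2"
    using assms by simp
  ultimately show ?thesis by linarith
qed

lemma covariance_matrix_convex:
  fixes Y1 Y2 :: "'a \<Rightarrow> real^'n"
  assumes M: "finite_measure M" and Y1: "square_integrable M Y1" and Y2: "square_integrable M Y2"
    and "0 \<le> \<theta>" "\<theta> \<le> 1"
  shows "loewner_le (covariance_matrix M (\<lambda>x. \<theta> *\<^sub>R Y1 x + (1 - \<theta>) *\<^sub>R Y2 x))
           (\<theta> *\<^sub>R covariance_matrix M Y1 + (1 - \<theta>) *\<^sub>R covariance_matrix M Y2)"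
  unfolding loewner_le_iff_quadratic_form
proof
  fix v :: "real^'n"
  let ?Y = "\<lambda>x. \<theta> *\<^sub>R Y1 x + (1 - \<theta>) *\<^sub>R Y2 x"
  define a where "a x = v \<bullet> (Y1 x - integral\<^sup>L M Y1)" for x
  define b where "b x = v \<bullet> (Y2 x - integral\<^sup>L M Y2)" for x
  have centered: "square_integrable M (\<lambda>x. v \<bullet> (Z x - integral\<^sup>L M Z))"
    if "square_integrable M Z" for Z :: "'a \<Rightarrow> real^'n"
    using square_integrable_diff_const[OF M that]
    by (rule square_integrable_bounded_linear[OF bounded_linear_inner_right])
  have Y: "square_integrable M ?Y"
    using Y1 Y2
    by (intro square_integrable_add square_integrable_bounded_linear[OF bounded_linear_scaleR_right])
  have a: "integrable M (\<lambda>x. (a x)\<^sup>2)" and b: "integrable M (\<lambda>x. (b x)\<^sup>2)"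
    using centered[OF Y1] centered[OF Y2] unfolding a_def b_def square_integrable_def by simp_all
  have mean: "integral\<^sup>L M ?Y = \<theta> *\<^sub>R integral\<^sup>L M Y1 + (1 - \<theta>) *\<^sub>R integral\<^sup>L M Y2"
    using square_integrable_integrable[OF M Y1] square_integrable_integrable[OF M Y2] by simp
  then have "v \<bullet> (?Y x - integral\<^sup>L M ?Y) = \<theta> * a x + (1 - \<theta>) * b x" for x
    unfolding a_def b_def mean by (simp add: algebra_simps inner_diff_right)
  then have "v \<bullet> (covariance_matrix M ?Y *v v) = (\<integral>x. (\<theta> * a x + (1 - \<theta>) * b x)\<^sup>2 \<partial>M)"
    by (simp add: quadratic_form_covariance_matrix[OF M Y])
  also have "\<dots> \<le> (\<integral>x. \<theta> * (a x)\<^sup>2 + (1 - \<theta>) * (b x)\<^sup>2 \<partial>M)"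
  proof (rule integral_mono)
    show "integrable M (\<lambda>x. (\<theta> * a x + (1 - \<theta>) * b x)\<^sup>2)"
      using \<open>\<And>x. v \<bullet> (?Y x - integral\<^sup>L M ?Y) = _\<close> centered[OF Y]
      unfolding square_integrable_def by simp
  qed (use a b square_convex_combination_le[OF \<open>0 \<le> \<theta>\<close> \<open>\<theta> \<le> 1\<close>] in simp_all)
  also have "\<dots> = v \<bullet> ((\<theta> *\<^sub>R covariance_matrix M Y1 + (1 - \<theta>) *\<^sub>R covariance_matrix M Y2) *v v)"
    using a b
    by (simp add: quadratic_form_covariance_matrix[OF M Y1] quadratic_form_covariance_matrix[OF M Y2]
        a_def b_def matrix_vector_mult_add_rdistrib scaleR_matrix_vector_assoc[symmetric]
        inner_add_right)
  finally show "v \<bullet> (covariance_matrix M ?Y *v v)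
      \<le> v \<bullet> ((\<theta> *\<^sub>R covariance_matrix M Y1 + (1 - \<theta>) *\<^sub>R covariance_matrix M Y2) *v v)" .
qed

lemma policy_input_convex_combination:
  "policy_input (\<lambda>t. \<theta> *\<^sub>R ub1 t + (1 - \<theta>) *\<^sub>R ub2 t)
     (\<lambda>i j. \<theta> *\<^sub>R K1 i j + (1 - \<theta>) *\<^sub>R K2 i j) w t x
   = \<theta> *\<^sub>R policy_input ub1 K1 w t x + (1 - \<theta>) *\<^sub>R policy_input ub2 K2 w t x"
proof -
  have mv: "(\<theta> *\<^sub>R P + (1 - \<theta>) *\<^sub>R Q) *v y = \<theta> *\<^sub>R (P *v y) + (1 - \<theta>) *\<^sub>R (Q *v y)"
    for P Q :: "real^'n^'m" and y
    by (simp add: matrix_vector_mult_add_rdistrib scaleR_matrix_vector_assoc[symmetric])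
  show ?thesis
    unfolding policy_input_def
    by (simp only: mv sum.distrib scaleR_sum_right[symmetric]) (simp add: algebra_simps)
qed

lemma traj_convex_combination:
  "traj A B x0 w (\<lambda>t. \<theta> *\<^sub>R ub1 t + (1 - \<theta>) *\<^sub>R ub2 t)
     (\<lambda>i j. \<theta> *\<^sub>R K1 i j + (1 - \<theta>) *\<^sub>R K2 i j) t x
   = \<theta> *\<^sub>R traj A B x0 w ub1 K1 t x + (1 - \<theta>) *\<^sub>R traj A B x0 w ub2 K2 t x"
proof (induction t)
  case 0
  then show ?case by (simp add: scaleR_left_distrib[symmetric])
next
  case (Suc t)
  then show ?case
    by (simp only: traj.simps policy_input_convex_combination matrix_vector_right_distrib
        matrix_vector_mult_scaleR) (simp add: algebra_simps)
qed

lemma traj_square_integrable: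
  assumes M: "finite_measure M" and "square_integrable M x0"
    and w_sq: "\<And>t. t < T \<Longrightarrow> square_integrable M (w t)" and "t \<le> T"
  shows "square_integrable M (traj A B x0 w ub K t)"
  using \<open>t \<le> T\<close>
proof (induction t)
  case 0
  then show ?case using \<open>square_integrable M x0\<close> by simp
next
  case (Suc t)
  have "square_integrable M (policy_input ub K w t)"
    unfolding policy_input_def using Suc.prems
    by (intro square_integrable_add square_integrable_const[OF M] square_integrable_sum
        square_integrable_bounded_linear[OF matrix_vector_mul_bounded_linear] w_sq) auto
  with Suc show ?case
    by (auto intro!: square_integrable_add w_sq
        square_integrable_bounded_linear[OF matrix_vector_mul_bounded_linear])
qed

lemma var_x_eq_covariance_matrix:
  "var_x M A B x0 w ub K t = covariance_matrix M (traj A B x0 w ub K t)"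
  by (simp add: var_x_def mean_x_def covariance_matrix_def)

lemma dec_convex_decision_space: "dec_convex (decision_space T)"
  by (auto simp: dec_convex_def decision_space_def)

theorem proposition4:
  fixes M :: "'a measure" and T :: nat
    and A :: "nat \<Rightarrow> real^'n^'n" and B :: "nat \<Rightarrow> real^'m^'n"
    and x0 :: "'a \<Rightarrow> real^'n" and w :: "nat \<Rightarrow> 'a \<Rightarrow> real^'n"
    and \<mu>0 \<mu>f :: "real^'n" and \<Sigma>0 W \<Sigma>f :: "real^'n^'n"
  assumes "prob_space M"
    and "sym_pd \<Sigma>f"
    and "sym_pd \<Sigma>0"
    and "sym_psd W"
    and "gaussian_vec M x0 \<mu>0 \<Sigma>0"
    and "\<forall>t<T. gaussian_vec M (w t) 0 W"
    and "prob_space.indep_vars M (\<lambda>_. borel) w {..<T}"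
    and "\<forall>t<T. integral\<^sup>L M (\<lambda>\<omega>. outer (x0 \<omega>) (w t \<omega>)) = 0"
  shows "dec_convex {(ub, K) \<in> decision_space T.
                       loewner_le (var_x M A B x0 w ub K T) \<Sigma>f \<and>
                       mean_x M A B x0 w ub K T = \<mu>f}" (is "dec_convex ?S")
proof -
  interpret prob_space M by fact
  have x0_sq: "square_integrable M x0"
    using assms(1,5) sym_pd_imp_psd[OF assms(3)] by (rule gaussian_vec_square_integrable)
  have w_sq: "square_integrable M (w t)" if "t < T" for t
    using assms(1,4,6) that unfolding sym_psd_def by (auto intro: gaussian_vec_square_integrable)
  have traj_sq: "square_integrable M (traj A B x0 w ub K T)" for ub K
    using traj_square_integrable[OF finite_measure_axioms x0_sq w_sq order_refl] .
  show ?thesis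
    unfolding dec_convex_def
  proof (intro allI impI)
    fix ub1 K1 ub2 K2 and \<theta> :: real
    assume mem: "(ub1, K1) \<in> ?S" "(ub2, K2) \<in> ?S" and \<theta>: "0 \<le> \<theta>" "\<theta> \<le> 1"
    let ?ub = "\<lambda>t. \<theta> *\<^sub>R ub1 t + (1 - \<theta>) *\<^sub>R ub2 t"
      and ?K = "\<lambda>i j. \<theta> *\<^sub>R K1 i j + (1 - \<theta>) *\<^sub>R K2 i j"
    have combination: "traj A B x0 w ?ub ?K T
        = (\<lambda>x. \<theta> *\<^sub>R traj A B x0 w ub1 K1 T x + (1 - \<theta>) *\<^sub>R traj A B x0 w ub2 K2 T x)"
      by (rule ext) (rule traj_convex_combination)
    have "(?ub, ?K) \<in> decision_space T"
      using mem \<theta> dec_convex_decision_space unfolding dec_convex_def by blast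
    moreover have "loewner_le (covariance_matrix M (traj A B x0 w ?ub ?K T)) \<Sigma>f"
      unfolding combination using mem \<theta>
      by (intro loewner_le_trans[OF covariance_matrix_convex loewner_le_convex_combination]
          finite_measure_axioms traj_sq) (auto simp: var_x_eq_covariance_matrix)
    moreover have "integral\<^sup>L M (traj A B x0 w ?ub ?K T) = \<mu>f"
      unfolding combination using mem square_integrable_integrable[OF finite_measure_axioms traj_sq]
      by (simp add: mean_x_def scaleR_left_diff_distrib)
    ultimately show "(?ub, ?K) \<in> ?S"
      by (simp add: var_x_eq_covariance_matrix mean_x_def)
  qed
qed

end
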